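(* Let $p_1,\dots,p_n$ be non-negative integers and $q_1,\dots,q_n$ positive integers with $q_1+\dots+q_n\equiv 0\pmod 2$, and let $W=H(q_1,p_1)\times\dots\times H(q_n,p_n)$ with Lie algebra $\mathfrak w$. Then $\dim\mathfrak w=\sum_i(2q_ip_i+q_i)$ is even, $\dim[\mathfrak w,\mathfrak w]=\sum_{i}q_ip_i$, and $\dim\mathfrak w\ge 2\dim[\mathfrak w,\mathfrak w]+2$; consequently $W$ is a Lie group of type $T$.
   Context: $H(q,p)$ is the group of real block matrices $\begin{pmatrix} I_p & A & B\\ 0 & I_q & C\\ 0&0&I_q\end{pmatrix}$ with $A,B$ arbitrary real $p\times q$ matrices and $C$ a diagonal real $q\times q$ matrix. A Lie group is of type $T$ if every left-invariant almost complex structure on it has nonzero holomorphic type, where holomorphic type is defined as follows: a smooth complex function $f$ is holomorphic if $df$ is of type $(1,0)$ w.r.t. $J$; $m(x)$ is the maximal number of local holomorphic functions near $x$ with linearly independent differentials at $x$; $J$ has holomorphic type $m$ if $m(x)=m$ for all $x$. Known fact that may be used: every $2N$-dimensional Lie group whose Lie algebra has commutator ideal of dimension less than $N$ is of type $T$. *)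

theory Defs
  imports "HOL-Analysis.Analysis"
begin

text \<open>Finite matrices with variable size are first written as functions
  nat => nat => real (entries outside the relevant index range are irrelevant/zero).\<close>

text \<open>The block matrix (I_p, A, B; 0, I_q, C; 0, 0, I_q) of size p+2q.
  A, B are p x q, C is q x q (required to be diagonal in H_params).\<close>
definition Hmat :: "nat \<Rightarrow> nat \<Rightarrow> (nat \<Rightarrow> nat \<Rightarrow> real) \<Rightarrow> (nat \<Rightarrow> nat \<Rightarrow> real)
                    \<Rightarrow> (nat \<Rightarrow> nat \<Rightarrow> real) \<Rightarrow> nat \<Rightarrow> nat \<Rightarrow> real" where
  "Hmat q p A B C r c =
     (if r = c \<and> r < p + 2*q then 1
      else if r < p \<and> p \<le> c \<and> c < p + q then A r (c - p)
      else if r < p \<and> p + q \<le> c \<and> c < p + 2*q then B r (c - p - q)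
      else if p \<le> r \<and> r < p + q \<and> p + q \<le> c \<and> c < p + 2*q then C (r - p) (c - p - q)
      else 0)"

definition diag_mat :: "nat \<Rightarrow> (nat \<Rightarrow> nat \<Rightarrow> real) \<Rightarrow> bool" where
  "diag_mat q C \<longleftrightarrow> (\<forall>j<q. \<forall>k<q. j \<noteq> k \<longrightarrow> C j k = 0)"

definition bsize :: "(nat \<Rightarrow> nat) \<Rightarrow> (nat \<Rightarrow> nat) \<Rightarrow> nat \<Rightarrow> nat" where
  "bsize p q i = p i + 2 * q i"

definition boff :: "(nat \<Rightarrow> nat) \<Rightarrow> (nat \<Rightarrow> nat) \<Rightarrow> nat \<Rightarrow> nat" where
  "boff p q i = (\<Sum>j<i. bsize p q j)"

definition Nsize :: "nat \<Rightarrow> (nat \<Rightarrow> nat) \<Rightarrow> (nat \<Rightarrow> nat) \<Rightarrow> nat" where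
  "Nsize n p q = (\<Sum>i<n. bsize p q i)"

definition blockdiag :: "nat \<Rightarrow> (nat \<Rightarrow> nat) \<Rightarrow> (nat \<Rightarrow> nat)
    \<Rightarrow> (nat \<Rightarrow> nat \<Rightarrow> nat \<Rightarrow> real) \<Rightarrow> nat \<Rightarrow> nat \<Rightarrow> real" where
  "blockdiag n p q Hs r c =
     (\<Sum>i<n. if boff p q i \<le> r \<and> r < boff p q i + bsize p q i
               \<and> boff p q i \<le> c \<and> c < boff p q i + bsize p q i
            then Hs i (r - boff p q i) (c - boff p q i) else 0)"

definition W_nat :: "nat \<Rightarrow> (nat \<Rightarrow> nat) \<Rightarrow> (nat \<Rightarrow> nat) \<Rightarrow> (nat \<Rightarrow> nat \<Rightarrow> real) set" where
  "W_nat n p q = {blockdiag n p q (\<lambda>i. Hmat (q i) (p i) (A i) (B i) (C i)) | A B C.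
                    \<forall>i<n. diag_mat (q i) (C i)}"

text \<open>Transfer to genuine N x N real matrices (type real^'N^'N), where the
  index type 'N is identified with {0..<N} via a bijection e.\<close>
definition to_mat :: "nat \<Rightarrow> (nat \<Rightarrow> 'N::finite) \<Rightarrow> (nat \<Rightarrow> nat \<Rightarrow> real) \<Rightarrow> real^'N^'N" where
  "to_mat N e M = (\<chi> a b. M (the_inv_into {0..<N} e a) (the_inv_into {0..<N} e b))"

definition Wgrp :: "nat \<Rightarrow> (nat \<Rightarrow> nat) \<Rightarrow> (nat \<Rightarrow> nat) \<Rightarrow> (nat \<Rightarrow> 'N::finite) \<Rightarrow> (real^'N^'N) set" where
  "Wgrp n p q e = to_mat (Nsize n p q) e ` W_nat n p q"

definition lie_alg :: "(real^'N^'N) set \<Rightarrow> (real^'N^'N) set" where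
  "lie_alg G = {X. \<exists>\<gamma>. (\<forall>t. \<gamma> t \<in> G) \<and> \<gamma> 0 = mat 1 \<and> (\<gamma> has_vector_derivative X) (at 0)}"

definition commutator_ideal :: "(real^'N^'N) set \<Rightarrow> (real^'N^'N) set" where
  "commutator_ideal L = span {X ** Y - Y ** X | X Y. X \<in> L \<and> Y \<in> L}"

text \<open>Existence and continuity of all iterated directional derivatives on an open set
  (for open subsets of a finite-dimensional space this is C^infinity).\<close>
primrec iter_diff :: "'a::real_normed_vector set \<Rightarrow> ('a \<Rightarrow> complex) \<Rightarrow> 'a list \<Rightarrow> bool" where
  "iter_diff U F [] = continuous_on U F"
| "iter_diff U F (v # vs) =
     (\<exists>G. (\<forall>x\<in>U. ((\<lambda>t. F (x + t *\<^sub>R v)) has_vector_derivative G x) (at 0)) \<and> iter_diff U G vs)"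

definition smooth_on :: "'a::real_normed_vector set \<Rightarrow> ('a \<Rightarrow> complex) \<Rightarrow> bool" where
  "smooth_on U F \<longleftrightarrow> (\<forall>vs. iter_diff U F vs)"

definition dd :: "('a::real_normed_vector \<Rightarrow> complex) \<Rightarrow> 'a \<Rightarrow> 'a \<Rightarrow> complex" where
  "dd F x w = vector_derivative (\<lambda>t. F (x + t *\<^sub>R w)) (at 0)"

text \<open>Left-invariant almost complex structure on the matrix Lie group G: a linear
  endomorphism J of the Lie algebra with J^2 = -1; at g it acts by J_g(g X) = g (J X).\<close>
definition left_inv_acs :: "(real^'N^'N) set \<Rightarrow> (real^'N^'N \<Rightarrow> real^'N^'N) \<Rightarrow> bool" where
  "left_inv_acs G J \<longleftrightarrow>
     (\<forall>X\<in>lie_alg G. J X \<in> lie_alg G \<and> J (J X) = - X) \<and>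
     (\<forall>X\<in>lie_alg G. \<forall>Y\<in>lie_alg G. J (X + Y) = J X + J Y) \<and>
     (\<forall>X\<in>lie_alg G. \<forall>a. J (a *\<^sub>R X) = a *\<^sub>R J X)"

text \<open>There are k local holomorphic functions near x (smooth functions on a
  neighbourhood of x in G, given as restrictions of smooth functions on an ambient open
  set U) whose differentials at x are complex-linearly independent. Holomorphic means
  df is of type (1,0): df(J_y w) = i df(w) for tangent vectors w = y X at y.\<close>
definition hol_indep :: "(real^'N^'N) set \<Rightarrow> (real^'N^'N \<Rightarrow> real^'N^'N) \<Rightarrow> real^'N^'N \<Rightarrow> nat \<Rightarrow> bool" where
  "hol_indep G J x k \<longleftrightarrow>
     (\<exists>U F. open U \<and> x \<in> U \<and>
        (\<forall>i<k. smooth_on U (F i) \<and>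
               (\<forall>y\<in>U \<inter> G. \<forall>X\<in>lie_alg G. dd (F i) y (y ** J X) = \<i> * dd (F i) y (y ** X))) \<and>
        (\<forall>c::nat \<Rightarrow> complex. (\<forall>X\<in>lie_alg G. (\<Sum>i<k. c i * dd (F i) x (x ** X)) = 0)
                \<longrightarrow> (\<forall>i<k. c i = 0)))"

definition has_hol_type :: "(real^'N^'N) set \<Rightarrow> (real^'N^'N \<Rightarrow> real^'N^'N) \<Rightarrow> nat \<Rightarrow> bool" where
  "has_hol_type G J m \<longleftrightarrow> (\<forall>x\<in>G. hol_indep G J x m \<and> (\<forall>k. hol_indep G J x k \<longrightarrow> k \<le> m))"

definition type_T :: "(real^'N^'N) set \<Rightarrow> bool" where
  "type_T G \<longleftrightarrow> (\<forall>J. left_inv_acs G J \<longrightarrow> (\<exists>m. m \<noteq> 0 \<and> has_hol_type G J m))"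

end

theory Submission
  imports Defs
begin

text \<open>After relabelling the indices, W consists of the matrices 1 + X with X supported on a
  pattern P (the positions of A, B and diag C in each block), where P O P \<subseteq> P and
  P O P O P = {}. Its Lie algebra is spanned by the matrix units of P and its commutator ideal by
  those of P O P, which gives the dimensions |P| = \<Sum>(2 q_i p_i + q_i) and |P O P| = \<Sum> q_i p_i.

  For type T: as 2 dim [w,w] < dim w, some real functional \<psi> on w vanishes on [w,w] + J [w,w];
  then X \<mapsto> \<psi> X - i \<psi> (J X) is of type (1,0). Composed with the projection that forgets the
  entries in P O P, which is invariant under left multiplication, it extends to a global linear
  holomorphic function with nonzero differential everywhere. Hence the holomorphic type at the
  identity is positive; it is bounded by dim w because differentials of smooth functions are
  linear, and it is the same at every point by left translation.\<close>

section \<open>Directional derivatives of smooth functions\<close>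

lemma iter_diff_const: "iter_diff U (\<lambda>_. c) vs"
proof (induction vs arbitrary: c)
  case Nil then show ?case by simp
next
  case (Cons v vs)
  show ?case by (auto intro!: exI[of _ "\<lambda>_. 0"] Cons)
qed

lemma has_vector_derivative_linear_along_line:
  fixes F :: "'a::real_normed_vector \<Rightarrow> 'b::real_normed_vector"
  assumes "linear F" shows "((\<lambda>t. F (x + t *\<^sub>R v)) has_vector_derivative F v) (at 0)"
proof -
  have "(\<lambda>t. F (x + t *\<^sub>R v)) = (\<lambda>t. F x + t *\<^sub>R F v)"
    using assms by (simp add: linear_add linear_scale)
  then show ?thesis by (auto intro!: derivative_eq_intros)
qed

lemma dd_eqI: "((\<lambda>t. F (y + t *\<^sub>R v)) has_vector_derivative D) (at 0) \<Longrightarrow> dd F y v = D"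
  unfolding dd_def by (rule vector_derivative_at)

lemma smooth_on_linear:
  fixes F :: "'a::euclidean_space \<Rightarrow> complex"
  assumes "linear F" shows "smooth_on U F"
  unfolding smooth_on_def
proof
  fix vs show "iter_diff U F vs"
  proof (cases vs)
    case Nil then show ?thesis
      using assms by (simp add: linear_continuous_on linear_conv_bounded_linear)
  next
    case (Cons v ws)
    then show ?thesis
      using has_vector_derivative_linear_along_line[OF assms]
      by (auto intro!: exI[of _ "\<lambda>_. F v"] iter_diff_const)
  qed
qed

lemma dd_linear:
  fixes F :: "'a::euclidean_space \<Rightarrow> complex"
  assumes "linear F" shows "dd F y w = F w"
  by (rule dd_eqI[OF has_vector_derivative_linear_along_line[OF assms]])

lemma iter_diff_compose_linear:
  fixes L :: "'a::euclidean_space \<Rightarrow> 'b::euclidean_space"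
  assumes "linear L" and "iter_diff U F (map L vs)"
  shows "iter_diff (L -` U) (\<lambda>y. F (L y)) vs"
  using assms(2)
proof (induction vs arbitrary: F)
  case Nil
  have "continuous_on (L -` U) L"
    using assms(1) by (simp add: linear_continuous_on linear_conv_bounded_linear)
  moreover have "continuous_on U F" using Nil by simp
  ultimately have "continuous_on (L -` U) (F \<circ> L)"
    by (metis continuous_on_compose continuous_on_subset image_vimage_subset)
  then show ?case by (simp add: o_def)
next
  case (Cons v vs)
  then obtain G where G: "\<forall>x\<in>U. ((\<lambda>t. F (x + t *\<^sub>R L v)) has_vector_derivative G x) (at 0)"
    and "iter_diff U G (map L vs)" by auto
  then have "iter_diff (L -` U) (\<lambda>y. G (L y)) vs" using Cons.IH by blast
  moreover have "\<forall>x\<in>L -` U. ((\<lambda>t. F (L (x + t *\<^sub>R v))) has_vector_derivative G (L x)) (at 0)"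
    using G assms(1) by (simp add: linear_add linear_scale)
  ultimately show ?case by (auto intro!: exI[of _ "\<lambda>y. G (L y)"])
qed

lemma smooth_on_compose_linear:
  fixes L :: "'a::euclidean_space \<Rightarrow> 'b::euclidean_space"
  assumes "linear L" "smooth_on U F" shows "smooth_on (L -` U) (\<lambda>y. F (L y))"
  using assms iter_diff_compose_linear unfolding smooth_on_def by blast

lemma dd_compose_linear:
  assumes "linear L" shows "dd (\<lambda>y. F (L y)) x w = dd F (L x) (L w)"
  using assms unfolding dd_def by (simp add: linear_add linear_scale)

lemma smooth_on_directional_derivative:
  assumes "smooth_on U F"
  obtains G where "\<And>y. y \<in> U \<Longrightarrow> ((\<lambda>t. F (y + t *\<^sub>R v)) has_vector_derivative G y) (at 0)"
    and "continuous_on U G"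
proof -
  from assms have "iter_diff U F [v]" unfolding smooth_on_def by blast
  then show ?thesis using that by auto
qed

lemma has_vector_derivative_along_line_at:
  fixes F :: "'a::real_normed_vector \<Rightarrow> 'b::real_normed_vector"
  assumes "((\<lambda>t. F ((y + s *\<^sub>R w) + t *\<^sub>R w)) has_vector_derivative D) (at 0)"
  shows "((\<lambda>t. F (y + t *\<^sub>R w)) has_vector_derivative D) (at s)"
proof -
  have "((\<lambda>t. t - s) has_vector_derivative 1) (at s)"
    by (auto intro!: derivative_eq_intros)
  from vector_diff_chain_at[OF this, of "\<lambda>t. F ((y + s *\<^sub>R w) + t *\<^sub>R w)" D] assms
  have "((\<lambda>t. F ((y + s *\<^sub>R w) + (t - s) *\<^sub>R w)) has_vector_derivative D) (at s)"
    by (simp add: o_def)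
  moreover have "(y + s *\<^sub>R w) + (t - s) *\<^sub>R w = y + t *\<^sub>R w" for t
    by (simp add: algebra_simps)
  ultimately show ?thesis by simp
qed

lemma increment_along_line_bound:
  fixes F :: "'a::real_normed_vector \<Rightarrow> 'b::real_normed_vector"
  assumes deriv: "\<And>s. \<bar>s\<bar> \<le> \<bar>t\<bar> \<Longrightarrow> ((\<lambda>s. F (a + s *\<^sub>R w)) has_vector_derivative G s) (at s)"
    and close: "\<And>s. \<bar>s\<bar> \<le> \<bar>t\<bar> \<Longrightarrow> norm (G s - g) \<le> B"
  shows "norm (F (a + t *\<^sub>R w) - F a - t *\<^sub>R g) \<le> B * \<bar>t\<bar>"
proof -
  define f where "f s = F (a + s *\<^sub>R w) - s *\<^sub>R g" for s
  have f': "(f has_derivative (\<lambda>h. h *\<^sub>R (G s - g))) (at s within cball 0 \<bar>t\<bar>)"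
    if "s \<in> cball 0 \<bar>t\<bar>" for s
  proof -
    have "(f has_vector_derivative G s - g) (at s)"
      unfolding f_def using deriv that by (auto intro!: derivative_eq_intros)
    then show ?thesis unfolding has_vector_derivative_def by (rule has_derivative_at_withinI)
  qed
  have f'_bound: "onorm (\<lambda>h::real. h *\<^sub>R (G s - g)) \<le> B" if "s \<in> cball 0 \<bar>t\<bar>" for s
    using onorm_scaleR_left[OF bounded_linear_ident, of "G s - g"] close that
    by (simp add: onorm_id)
  have "norm (f t - f 0) \<le> B * norm (t - 0)"
    by (rule differentiable_bound[OF convex_cball f' f'_bound]) auto
  then show ?thesis by (simp add: f_def algebra_simps)
qed

lemma dist_add_two_scaleR_less:
  assumes "\<bar>s\<bar> \<le> \<bar>t\<bar>" "\<bar>t\<bar> * (norm v + norm w + 1) < d"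
  shows "dist (x + t *\<^sub>R v + s *\<^sub>R w) x < d"
proof -
  have "dist (x + t *\<^sub>R v + s *\<^sub>R w) x \<le> \<bar>t\<bar> * norm v + \<bar>s\<bar> * norm w"
    using norm_triangle_ineq[of "t *\<^sub>R v" "s *\<^sub>R w"] by (simp add: dist_norm add.assoc)
  also have "\<dots> \<le> \<bar>t\<bar> * (norm v + norm w + 1)"
    using mult_right_mono[OF assms(1) norm_ge_zero[of w]] by (simp add: algebra_simps)
  finally show ?thesis using assms(2) by linarith
qed

text \<open>Mean value argument: the increment along w from x + t v is controlled by the
  w-derivative, which stays close to its value at x by continuity.\<close>
lemma has_vector_derivative_along_sum:
  fixes F :: "'a::real_normed_vector \<Rightarrow> 'b::real_normed_vector"
  assumes U: "open U" "x \<in> U"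
    and hv: "((\<lambda>t. F (x + t *\<^sub>R v)) has_vector_derivative Dv) (at 0)"
    and hw: "\<And>y. y \<in> U \<Longrightarrow> ((\<lambda>t. F (y + t *\<^sub>R w)) has_vector_derivative Gw y) (at 0)"
    and cont: "continuous (at x) Gw"
  shows "((\<lambda>t. F (x + t *\<^sub>R (v + w))) has_vector_derivative Dv + Gw x) (at 0)"
  unfolding has_vector_derivative_def has_derivative_at_alt
proof (intro conjI allI impI bounded_linear_scaleR_left)
  fix e :: real assume e: "e > 0"
  have "((\<lambda>t. F (x + t *\<^sub>R v)) has_derivative (\<lambda>t. t *\<^sub>R Dv)) (at 0)"
    using hv unfolding has_vector_derivative_def .
  then obtain d2 where d2: "d2 > 0" and d2': "\<And>t. norm (t - 0) < d2 \<Longrightarrow>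
      norm (F (x + t *\<^sub>R v) - F (x + 0 *\<^sub>R v) - (t - 0) *\<^sub>R Dv) \<le> e/2 * norm (t - 0)"
    using e unfolding has_derivative_at_alt by (meson half_gt_zero)
  obtain d1 where d1: "d1 > 0" and d1': "\<And>z. dist z x < d1 \<Longrightarrow> dist (Gw z) (Gw x) < e/2"
    using cont e unfolding continuous_at_eps_delta by (meson half_gt_zero)
  obtain r where r: "r > 0" "ball x r \<subseteq> U" using U open_contains_ball by blast
  define d0 where "d0 = min d1 r"
  define d where "d = min d2 (d0 / (norm v + norm w + 1))"
  have nvw: "norm v + norm w + 1 > 0" by (simp add: add_nonneg_pos)
  have "d > 0" using d1 d2 r nvw by (simp add: d_def d0_def)
  moreover have "norm (F (x + t *\<^sub>R (v + w)) - F (x + 0 *\<^sub>R (v + w)) - (t - 0) *\<^sub>R (Dv + Gw x))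
      \<le> e * norm (t - 0)" if t: "norm (t - 0) < d" for t
  proof -
    define a where "a = x + t *\<^sub>R v"
    have "\<bar>t\<bar> * (norm v + norm w + 1) < d0"
      using t nvw by (simp add: d_def pos_less_divide_eq)
    then have near: "dist (a + s *\<^sub>R w) x < d0" if "\<bar>s\<bar> \<le> \<bar>t\<bar>" for s
      using dist_add_two_scaleR_less[OF that] by (simp add: a_def)
    have "norm (F (a + t *\<^sub>R w) - F a - t *\<^sub>R Gw x) \<le> e/2 * \<bar>t\<bar>"
    proof (rule increment_along_line_bound)
      fix s :: real assume s: "\<bar>s\<bar> \<le> \<bar>t\<bar>"
      have "dist x (a + s *\<^sub>R w) < r" "dist (a + s *\<^sub>R w) x < d1"
        using near[OF s] by (simp_all add: d0_def dist_commute[of x])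
      then have "a + s *\<^sub>R w \<in> U" using r(2) by auto
      from has_vector_derivative_along_line_at[OF hw[OF this]]
      show "((\<lambda>s. F (a + s *\<^sub>R w)) has_vector_derivative Gw (a + s *\<^sub>R w)) (at s)" .
      show "norm (Gw (a + s *\<^sub>R w) - Gw x) \<le> e/2"
        using d1'[OF \<open>dist (a + s *\<^sub>R w) x < d1\<close>] by (simp add: dist_norm)
    qed
    moreover have "norm (F a - F x - t *\<^sub>R Dv) \<le> e/2 * \<bar>t\<bar>"
      using d2'[of t] t by (simp add: a_def d_def)
    ultimately have "norm ((F (a + t *\<^sub>R w) - F a - t *\<^sub>R Gw x) + (F a - F x - t *\<^sub>R Dv))
        \<le> e * \<bar>t\<bar>"
      using norm_triangle_ineq[of "F (a + t *\<^sub>R w) - F a - t *\<^sub>R Gw x" "F a - F x - t *\<^sub>R Dv"]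
      by linarith
    then show ?thesis by (simp add: a_def algebra_simps)
  qed
  ultimately show "\<exists>d>0. \<forall>t. norm (t - 0) < d \<longrightarrow>
      norm (F (x + t *\<^sub>R (v + w)) - F (x + 0 *\<^sub>R (v + w)) - (t - 0) *\<^sub>R (Dv + Gw x))
      \<le> e * norm (t - 0)" by blast
qed

lemma dd_add:
  fixes F :: "'a::real_normed_vector \<Rightarrow> complex"
  assumes "open U" "x \<in> U" and "smooth_on U F"
  shows "dd F x (v + w) = dd F x v + dd F x w"
proof -
  obtain Gv where hv: "\<And>y. y \<in> U \<Longrightarrow> ((\<lambda>t. F (y + t *\<^sub>R v)) has_vector_derivative Gv y) (at 0)"
    using smooth_on_directional_derivative[OF assms(3)] by metis
  obtain Gw where hw: "\<And>y. y \<in> U \<Longrightarrow> ((\<lambda>t. F (y + t *\<^sub>R w)) has_vector_derivative Gw y) (at 0)"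
    and "continuous_on U Gw" using smooth_on_directional_derivative[OF assms(3)] by metis
  then have "continuous (at x) Gw" using assms(1,2) continuous_on_eq_continuous_at by blast
  from has_vector_derivative_along_sum[OF assms(1,2) hv[OF assms(2)] hw this]
  have "dd F x (v + w) = Gv x + Gw x" by (rule dd_eqI)
  then show ?thesis by (simp add: dd_eqI[OF hv[OF assms(2)]] dd_eqI[OF hw[OF assms(2)]])
qed

lemma dd_scaleR:
  fixes F :: "'a::real_normed_vector \<Rightarrow> complex"
  assumes "x \<in> U" and "smooth_on U F"
  shows "dd F x (c *\<^sub>R v) = of_real c * dd F x v"
proof -
  obtain Gv where hv: "((\<lambda>t. F (x + t *\<^sub>R v)) has_vector_derivative Gv) (at 0)"
    using smooth_on_directional_derivative[OF assms(2)] assms(1) by metis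
  have "((\<lambda>t. c * t) has_vector_derivative c) (at 0)" by (auto intro!: derivative_eq_intros)
  from vector_diff_chain_at[OF this, of "\<lambda>t. F (x + t *\<^sub>R v)"] hv
  have "((\<lambda>t. F (x + t *\<^sub>R (c *\<^sub>R v))) has_vector_derivative c *\<^sub>R Gv) (at 0)"
    by (simp add: o_def mult.commute)
  then show ?thesis by (simp add: dd_eqI dd_eqI[OF hv] scaleR_conv_of_real)
qed

lemma linear_dd:
  fixes F :: "'a::real_normed_vector \<Rightarrow> complex"
  assumes "open U" "x \<in> U" and "smooth_on U F"
  shows "linear (dd F x)"
  by (rule linearI) (simp_all add: dd_add[OF assms] dd_scaleR[OF assms(2,3)] scaleR_conv_of_real)

lemma linear_matrix_mult_left: "linear (\<lambda>Y::real^'n::finite^'n. A ** Y)"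
  by (rule linearI) (simp_all add: matrix_add_ldistrib matrix_scalar_ac scalar_matrix_assoc)

lemma homogeneous_system_nontrivial_solution:
  fixes f :: "'i \<Rightarrow> 'j \<Rightarrow> 'a::field"
  assumes "finite J" "finite I" "card J < card I"
  shows "\<exists>c. (\<exists>i\<in>I. c i \<noteq> 0) \<and> (\<forall>j\<in>J. (\<Sum>i\<in>I. c i * f i j) = 0)"
  using assms
proof (induction J arbitrary: I f rule: finite_induct)
  case empty
  then have "I \<noteq> {}" by auto
  then obtain i where "i \<in> I" by blast
  then show ?case by (intro exI[of _ "\<lambda>_. 1"]) auto
next
  case (insert j0 J)
  show ?case
  proof (cases "\<forall>i\<in>I. f i j0 = 0")
    case True
    have "card J < card I" using insert by simp
    then obtain c where "\<exists>i\<in>I. c i \<noteq> 0" "\<forall>j\<in>J. (\<Sum>i\<in>I. c i * f i j) = 0"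
      using insert.IH[of I f] insert.prems(1) by blast
    with True show ?thesis by (intro exI[of _ c]) auto
  next
    case False
    then obtain i0 where i0: "i0 \<in> I" "f i0 j0 \<noteq> 0" by blast
    define I' where "I' = I - {i0}"
    have "finite I'" "card J < card I'" using insert i0 by (simp_all add: I'_def)
    \<comment> \<open>eliminate the unknown c i0 by means of equation j0\<close>
    then obtain c' where c': "\<exists>i\<in>I'. c' i \<noteq> 0"
      "\<forall>j\<in>J. (\<Sum>i\<in>I'. c' i * (f i j - f i j0 / f i0 j0 * f i0 j)) = 0"
      using insert.IH[of I' "\<lambda>i j. f i j - f i j0 / f i0 j0 * f i0 j"] by blast
    define S where "S = (\<Sum>i\<in>I'. c' i * f i j0)"
    define c where "c i = (if i = i0 then - S / f i0 j0 else c' i)" for i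
    have split: "(\<Sum>i\<in>I. c i * f i j) = c i0 * f i0 j + (\<Sum>i\<in>I'. c' i * f i j)" for j
    proof -
      have "(\<Sum>i\<in>I. c i * f i j) = c i0 * f i0 j + (\<Sum>i\<in>I'. c i * f i j)"
        using insert.prems(1) i0(1) unfolding I'_def by (simp add: sum.remove)
      also have "(\<Sum>i\<in>I'. c i * f i j) = (\<Sum>i\<in>I'. c' i * f i j)"
        by (rule sum.cong) (auto simp: c_def I'_def)
      finally show ?thesis .
    qed
    have "(\<Sum>i\<in>I. c i * f i j) = 0" if j: "j \<in> insert j0 J" for j
    proof (cases "j = j0")
      case True
      then show ?thesis using i0 unfolding split by (simp add: c_def S_def)
    next
      case False
      have "(\<Sum>i\<in>I'. c' i * f i j)
          = (\<Sum>i\<in>I'. c' i * (f i j - f i j0 / f i0 j0 * f i0 j) + c' i * f i j0 * (f i0 j / f i0 j0))"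
        using i0(2) by (intro sum.cong) (simp_all add: field_simps)
      also have "\<dots> = (\<Sum>i\<in>I'. c' i * (f i j - f i j0 / f i0 j0 * f i0 j)) + S * (f i0 j / f i0 j0)"
        by (simp add: sum.distrib S_def sum_distrib_right sum_divide_distrib)
      also have "\<dots> = S * (f i0 j / f i0 j0)" using c'(2) j False by simp
      finally show ?thesis using i0 unfolding split by (simp add: c_def)
    qed
    moreover have "\<exists>i\<in>I. c i \<noteq> 0" using c'(1) by (auto simp: c_def I'_def)
    ultimately show ?thesis by blast
  qed
qed

lemma span_image_subset_of_linear_on:
  assumes "subspace L" "B \<subseteq> L"
    and add: "\<And>X Y. X \<in> L \<Longrightarrow> Y \<in> L \<Longrightarrow> J (X + Y) = J X + J Y"
    and scale: "\<And>X a. X \<in> L \<Longrightarrow> J (a *\<^sub>R X) = a *\<^sub>R J X"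
    and "X \<in> span B"
  shows "J X \<in> span (J ` B)"
proof -
  from \<open>X \<in> span B\<close> have "X \<in> L \<and> J X \<in> span (J ` B)"
  proof (induction rule: span_induct_alt)
    case base
    have "J 0 = 0" using scale[of 0 0] subspace_0[OF assms(1)] by simp
    then show ?case using subspace_0[OF assms(1)] by (simp add: span_zero)
  next
    case (step c b Y)
    have cb: "c *\<^sub>R b \<in> L" using step(1) assms(2) subspace_scale[OF assms(1)] by blast
    then have "J (c *\<^sub>R b + Y) = J (c *\<^sub>R b) + J Y" using add step(2) by blast
    also have "J (c *\<^sub>R b) = c *\<^sub>R J b" using scale step(1) assms(2) by blast
    finally show ?case
      using step cb subspace_add[OF assms(1)] by (simp add: span_add span_scale span_base)
  qed
  then show ?thesis ..
qed

text \<open>Since the real span of K and J K has dimension at most 2 dim K < dim L, some vector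
  of L lies outside it; its component orthogonal to that span gives the functional.\<close>
lemma exists_functional_vanishing_on_subspace_and_image:
  fixes L K :: "'a::euclidean_space set"
  assumes "subspace L" "K \<subseteq> L" "2 * dim K < dim L"
    and add: "\<And>X Y. X \<in> L \<Longrightarrow> Y \<in> L \<Longrightarrow> J (X + Y) = J X + J Y"
    and scale: "\<And>X a. X \<in> L \<Longrightarrow> J (a *\<^sub>R X) = a *\<^sub>R J X"
  obtains z X0 where "X0 \<in> L" "inner z X0 \<noteq> 0"
    and "\<And>Y. Y \<in> K \<Longrightarrow> inner z Y = 0" and "\<And>Y. Y \<in> K \<Longrightarrow> inner z (J Y) = 0"
proof -
  obtain B where B: "B \<subseteq> K" "independent B" "K \<subseteq> span B" "card B = dim K"
    using basis_exists by blast
  have fin: "finite B" using B(2) by (rule finiteI_independent)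
  define V where "V = span (B \<union> J ` B)"
  have KV: "K \<subseteq> V" unfolding V_def using B(3) span_mono[of B] by blast
  have JKV: "J Y \<in> V" if "Y \<in> K" for Y
    using span_image_subset_of_linear_on[OF assms(1) _ add scale, of B Y] B(1,3) assms(2) that
      span_mono[of "J ` B" "B \<union> J ` B"]
    unfolding V_def by blast
  have "dim V \<le> card (B \<union> J ` B)" unfolding V_def by (rule dim_le_card) (use fin in auto)
  also have "\<dots> \<le> card B + card (J ` B)" by (rule card_Un_le)
  also have "\<dots> \<le> 2 * dim K" using card_image_le[OF fin, of J] B(4) by simp
  finally have "\<not> L \<subseteq> V" using dim_subset[of L V] assms(3) by linarith
  then obtain X0 where X0: "X0 \<in> L" "X0 \<notin> V" by blast
  obtain y z where y: "y \<in> V" and z: "\<And>w. w \<in> V \<Longrightarrow> orthogonal z w" and X0y: "X0 = y + z"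
    using orthogonal_subspace_decomp_exists[of "B \<union> J ` B" X0] unfolding V_def by blast
  have "z \<noteq> 0" using X0(2) y X0y by auto
  moreover have "inner z X0 = inner z z"
    using z[OF y] X0y by (simp add: orthogonal_def inner_add_right)
  ultimately have "inner z X0 \<noteq> 0" by simp
  moreover have "inner z Y = 0" "inner z (J Y) = 0" if "Y \<in> K" for Y
    using z KV JKV that unfolding orthogonal_def by blast+
  ultimately show ?thesis using that X0(1) by blast
qed

lemma hol_indep_le_dim:
  assumes "hol_indep G J x k"
  shows "k \<le> dim (lie_alg G)"
proof (rule ccontr)
  assume k: "\<not> k \<le> dim (lie_alg G)"
  from assms obtain U F where U: "open U" "x \<in> U" and sm: "\<And>i. i < k \<Longrightarrow> smooth_on U (F i)"
    and indep: "\<And>c::nat \<Rightarrow> complex. \<forall>X\<in>lie_alg G. (\<Sum>i<k. c i * dd (F i) x (x ** X)) = 0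
                \<Longrightarrow> \<forall>i<k. c i = 0"
    unfolding hol_indep_def by blast
  obtain B where B: "B \<subseteq> lie_alg G" "independent B" "lie_alg G \<subseteq> span B" "card B = dim (lie_alg G)"
    using basis_exists by blast
  then obtain c where c: "\<exists>i<k. c i \<noteq> 0" "\<forall>b\<in>B. (\<Sum>i<k. c i * dd (F i) x (x ** b)) = 0"
    using homogeneous_system_nontrivial_solution[of B "{..<k}" "\<lambda>i b. dd (F i) x (x ** b)"] k
    by (auto simp: finiteI_independent)
  have "linear (\<lambda>X. dd (F i) x (x ** X))" if "i < k" for i
    using linear_compose[OF linear_matrix_mult_left linear_dd[OF U sm[OF that]]] by (simp add: o_def)
  then have "linear (\<lambda>X. c i * dd (F i) x (x ** X))" if "i < k" for i
    using linear_compose[OF _ bounded_linear.linear[OF bounded_linear_mult_right]] that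
    by (auto simp: o_def)
  then have "linear (\<lambda>X. \<Sum>i<k. c i * dd (F i) x (x ** X))"
    by (intro linear_compose_sum) auto
  then have "\<forall>X\<in>lie_alg G. (\<Sum>i<k. c i * dd (F i) x (x ** X)) = 0"
    using linear_eq_0_on_span[of _ B] c(2) B(3) by blast
  then show False using indep c(1) by blast
qed

lemma hol_indep_left_translate:
  assumes "\<And>a b. a \<in> G \<Longrightarrow> b \<in> G \<Longrightarrow> a ** b \<in> G"
    and "g' \<in> G" and "g' ** g = mat 1"
    and "hol_indep G J x k"
  shows "hol_indep G J (g ** x) k"
proof -
  from assms(4) obtain U F where U: "open U" "x \<in> U"
    and hol: "\<forall>i<k. smooth_on U (F i) \<and>
               (\<forall>y\<in>U \<inter> G. \<forall>X\<in>lie_alg G. dd (F i) y (y ** J X) = \<i> * dd (F i) y (y ** X))"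
    and indep: "\<forall>c::nat \<Rightarrow> complex. (\<forall>X\<in>lie_alg G. (\<Sum>i<k. c i * dd (F i) x (x ** X)) = 0)
                \<longrightarrow> (\<forall>i<k. c i = 0)"
    unfolding hol_indep_def by blast
  define L where "L y = g' ** y" for y :: "real^'a^'a"
  have lin: "linear L" unfolding L_def by (rule linear_matrix_mult_left)
  have Lgx: "L (g ** x) = x" unfolding L_def by (simp add: matrix_mul_assoc assms(3))
  have dd_L: "dd (\<lambda>y. F i (L y)) y (y ** X) = dd (F i) (L y) (L y ** X)" for i y X
    unfolding dd_compose_linear[OF lin] by (simp add: L_def matrix_mul_assoc)
  have "open (L -` U)"
    using lin U(1) by (simp add: continuous_open_vimage linear_continuous_at linear_conv_bounded_linear)
  moreover have "g ** x \<in> L -` U" using U(2) Lgx by simp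
  moreover have "smooth_on (L -` U) (\<lambda>y. F i (L y))" if "i < k" for i
    using smooth_on_compose_linear[OF lin] hol that by blast
  moreover have "dd (\<lambda>y. F i (L y)) y (y ** J X) = \<i> * dd (\<lambda>y. F i (L y)) y (y ** X)"
    if "i < k" "y \<in> L -` U \<inter> G" "X \<in> lie_alg G" for i y X
  proof -
    have "L y \<in> U \<inter> G" using that(2) assms(1,2) by (simp add: L_def)
    then show ?thesis using hol that(1,3) by (simp add: dd_L)
  qed
  moreover have "\<forall>X\<in>lie_alg G. (\<Sum>i<k. c i * dd (F i) x (x ** X)) = 0"
    if "\<forall>X\<in>lie_alg G. (\<Sum>i<k. c i * dd (\<lambda>y. F i (L y)) (g ** x) ((g ** x) ** X)) = 0"
    for c :: "nat \<Rightarrow> complex"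
    using that by (simp add: dd_L Lgx)
  ultimately show ?thesis using indep unfolding hol_indep_def
    by (intro exI[of _ "L -` U"] exI[of _ "\<lambda>i y. F i (L y)"]) blast
qed

section \<open>Matrices supported on a pattern\<close>

definition pattern_matrices :: "('n::finite \<times> 'n) set \<Rightarrow> (real^'n^'n) set" where
  "pattern_matrices P = {X. \<forall>a b. (a, b) \<notin> P \<longrightarrow> X $ a $ b = 0}"

definition matrix_unit :: "'n::finite \<Rightarrow> 'n \<Rightarrow> real^'n^'n" where
  "matrix_unit a b = axis a (axis b 1)"

lemma matrix_unit_nth: "matrix_unit a b $ i $ j = (if i = a \<and> j = b then 1 else 0)"
  by (simp add: matrix_unit_def axis_def)

lemma matrix_unit_mult:
  "matrix_unit a b ** matrix_unit b' c = (if b = b' then matrix_unit a c else 0)"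
proof -
  have "(matrix_unit a b ** matrix_unit b' c) $ i $ j
      = (\<Sum>k\<in>UNIV. if k = b then (if i = a \<and> b = b' \<and> j = c then 1 else 0) else (0::real))" for i j
    unfolding matrix_matrix_mult_def vec_lambda_beta matrix_unit_nth by (rule sum.cong) auto
  then show ?thesis by (simp add: vec_eq_iff matrix_unit_nth)
qed

lemma matrix_add_rdistrib: "((A::'a::semiring_1^'n::finite^'m) + B) ** C = A ** C + B ** C"
  by (simp add: matrix_matrix_mult_def vec_eq_iff sum.distrib distrib_right)

lemma matrix_diff_rdistrib: "((A::'a::ring_1^'n::finite^'m) - B) ** C = A ** C - B ** C"
  by (simp add: matrix_matrix_mult_def vec_eq_iff sum_subtractf left_diff_distrib)

lemma matrix_diff_ldistrib: "(A::'a::ring_1^'n::finite^'m) ** (B - C) = A ** B - A ** C"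
  by (simp add: matrix_matrix_mult_def vec_eq_iff sum_subtractf right_diff_distrib)

lemma subspace_pattern_matrices: "subspace (pattern_matrices P)"
  unfolding subspace_def pattern_matrices_def by auto

lemma pattern_matrices_add:
  "X \<in> pattern_matrices P \<Longrightarrow> Y \<in> pattern_matrices P \<Longrightarrow> X + Y \<in> pattern_matrices P"
  and pattern_matrices_diff:
  "X \<in> pattern_matrices P \<Longrightarrow> Y \<in> pattern_matrices P \<Longrightarrow> X - Y \<in> pattern_matrices P"
  and pattern_matrices_scaleR: "X \<in> pattern_matrices P \<Longrightarrow> c *\<^sub>R X \<in> pattern_matrices P"
  unfolding pattern_matrices_def by auto

lemma pattern_matrices_mono: "P \<subseteq> Q \<Longrightarrow> pattern_matrices P \<subseteq> pattern_matrices Q"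
  unfolding pattern_matrices_def by auto

lemma pattern_matrices_empty: "pattern_matrices {} = {0}"
  unfolding pattern_matrices_def by (auto simp: vec_eq_iff)

lemma matrix_unit_in_pattern_matrices: "(a, b) \<in> P \<Longrightarrow> matrix_unit a b \<in> pattern_matrices P"
  unfolding pattern_matrices_def by (auto simp: matrix_unit_nth)

lemma pattern_matrices_mult:
  assumes "X \<in> pattern_matrices P" "Y \<in> pattern_matrices Q"
  shows "X ** Y \<in> pattern_matrices (P O Q)"
  unfolding pattern_matrices_def
proof (intro CollectI allI impI)
  fix a b assume ab: "(a, b) \<notin> P O Q"
  have "\<forall>k\<in>UNIV. X $ a $ k * Y $ k $ b = 0"
  proof
    fix k
    show "X $ a $ k * Y $ k $ b = 0"
    proof (cases "(a, k) \<in> P")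
      case True
      then have "(k, b) \<notin> Q" using ab by blast
      then show ?thesis using assms(2) unfolding pattern_matrices_def by simp
    next
      case False
      then show ?thesis using assms(1) unfolding pattern_matrices_def by simp
    qed
  qed
  from sum.neutral[OF this] show "(X ** Y) $ a $ b = 0" by (simp add: matrix_matrix_mult_def)
qed

lemma pattern_matrices_eq_span:
  "pattern_matrices (P :: ('n::finite \<times> 'n) set) = span ((\<lambda>(a, b). matrix_unit a b) ` P)"
proof
  let ?E = "(\<lambda>(a, b). matrix_unit a b) ` P"
  show "span ?E \<subseteq> pattern_matrices P"
    using matrix_unit_in_pattern_matrices subspace_pattern_matrices
    by (intro span_minimal) auto
  show "pattern_matrices P \<subseteq> span ?E"
  proof
    fix X :: "real^'n^'n" assume X: "X \<in> pattern_matrices P"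
    have EB: "?E \<subseteq> Basis" unfolding Basis_vec_def matrix_unit_def by auto
    have "inner X u = 0" if "u \<in> Basis - ?E" for u
    proof -
      from that obtain a b where u: "u = matrix_unit a b"
        unfolding Basis_vec_def matrix_unit_def by auto
      with that have "(a, b) \<notin> P" by auto
      with u
      show ?thesis using X by (simp add: matrix_unit_def inner_axis pattern_matrices_def)
    qed
    then have "(\<Sum>u\<in>Basis. inner X u *\<^sub>R u) = (\<Sum>u\<in>?E. inner X u *\<^sub>R u)"
      using EB by (intro sum.mono_neutral_right) auto
    then have "X = (\<Sum>u\<in>?E. inner X u *\<^sub>R u)"
      by (simp add: euclidean_representation)
    also have "\<dots> \<in> span ?E" by (intro span_sum span_scale span_base)
    finally show "X \<in> span ?E" .
  qed
qed

lemma dim_pattern_matrices: "dim (pattern_matrices (P :: ('n::finite \<times> 'n) set)) = card P"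
proof -
  let ?E = "(\<lambda>(a, b). matrix_unit a b) ` P"
  have "?E \<subseteq> Basis" unfolding Basis_vec_def matrix_unit_def by auto
  then have "independent ?E" using independent_Basis independent_mono by blast
  moreover have "inj_on (\<lambda>(a, b). matrix_unit a b) P"
    by (auto simp: inj_on_def matrix_unit_def axis_eq_axis)
  ultimately show ?thesis
    unfolding pattern_matrices_eq_span dim_span by (simp add: dim_eq_card_independent card_image)
qed

section \<open>Unipotent pattern groups\<close>

locale pattern_group =
  fixes P :: "('n::finite \<times> 'n) set"
  assumes relcomp_subset: "P O P \<subseteq> P"
    and relcomp3_empty: "P O P O P = {}"
begin

definition grp :: "(real^'n^'n) set" where
  "grp = {Y. Y - mat 1 \<in> pattern_matrices P}"

lemma relcomp_subset_pattern_matrices: "pattern_matrices (P O P) \<subseteq> pattern_matrices P"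
  by (rule pattern_matrices_mono[OF relcomp_subset])

lemma pattern_matrices_mult_closed:
  "X \<in> pattern_matrices P \<Longrightarrow> Y \<in> pattern_matrices P \<Longrightarrow> X ** Y \<in> pattern_matrices P"
  using pattern_matrices_mult relcomp_subset_pattern_matrices by blast

lemma cube_eq_0: "X \<in> pattern_matrices P \<Longrightarrow> X ** X ** X = 0"
  using pattern_matrices_mult[OF pattern_matrices_mult] relcomp3_empty pattern_matrices_empty
  by (metis O_assoc singletonD)

lemma one_in_grp: "mat 1 \<in> grp"
  unfolding grp_def pattern_matrices_def by simp

lemma grp_mult_closed:
  assumes "y \<in> grp" "z \<in> grp" shows "y ** z \<in> grp"
proof -
  define X Z where "X = y - mat 1" and "Z = z - mat 1"
  have X: "X \<in> pattern_matrices P" and Z: "Z \<in> pattern_matrices P"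
    using assms by (auto simp: grp_def X_def Z_def)
  have "y ** z - mat 1 = X + Z + X ** Z"
    by (simp add: X_def Z_def matrix_add_ldistrib matrix_diff_rdistrib matrix_diff_ldistrib)
  then show ?thesis unfolding grp_def
    by (simp add: X Z pattern_matrices_mult_closed pattern_matrices_add)
qed

text \<open>The inverse of 1 + X is 1 - X + X ** X, because X ** X ** X = 0.\<close>
lemma grp_inverse:
  assumes "y \<in> grp"
  obtains z where "z \<in> grp" "z ** y = mat 1" "y ** z = mat 1"
proof -
  define X where "X = y - mat 1"
  have X: "X \<in> pattern_matrices P" using assms by (simp add: grp_def X_def)
  define z where "z = mat 1 - X + X ** X"
  have "z - mat 1 = X ** X - X" by (simp add: z_def)
  then have "z \<in> grp" unfolding grp_def
    by (simp add: X pattern_matrices_mult_closed pattern_matrices_diff)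
  moreover have "z ** y = mat 1" "y ** z = mat 1"
  proof -
    have y: "y = mat 1 + X" by (simp add: X_def)
    have "X ** (X ** X) = 0" using cube_eq_0[OF X] by (simp add: matrix_mul_assoc)
    then show "z ** y = mat 1" "y ** z = mat 1"
      using cube_eq_0[OF X] unfolding y z_def
      by (simp_all add: matrix_add_ldistrib matrix_add_rdistrib matrix_diff_rdistrib
          matrix_diff_ldistrib)
  qed
  ultimately show ?thesis using that by blast
qed

lemma lie_alg_grp: "lie_alg grp = pattern_matrices P"
proof
  show "lie_alg grp \<subseteq> pattern_matrices P"
  proof
    fix X assume "X \<in> lie_alg grp"
    then obtain \<gamma> where \<gamma>: "\<forall>t. \<gamma> t \<in> grp" and "(\<gamma> has_vector_derivative X) (at 0)"
      unfolding lie_alg_def by blast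
    show "X \<in> pattern_matrices P" unfolding pattern_matrices_def
    proof (intro CollectI allI impI)
      fix a b assume ab: "(a, b) \<notin> P"
      have "bounded_linear (\<lambda>Y::real^'n^'n. Y $ a $ b)"
        using bounded_linear_compose[OF bounded_linear_vec_nth bounded_linear_vec_nth] .
      from bounded_linear.has_vector_derivative[OF this \<open>(\<gamma> has_vector_derivative X) (at 0)\<close>]
      have "((\<lambda>t. \<gamma> t $ a $ b) has_vector_derivative X $ a $ b) (at 0)" .
      moreover have "(\<lambda>t. \<gamma> t $ a $ b) = (\<lambda>t. mat 1 $ a $ b)"
        using \<gamma> ab unfolding grp_def pattern_matrices_def by auto
      ultimately show "X $ a $ b = 0"
        using vector_derivative_unique_at has_vector_derivative_const by metis
    qed
  qed
  show "pattern_matrices P \<subseteq> lie_alg grp"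
  proof
    fix X assume "X \<in> pattern_matrices P"
    then have "mat 1 + t *\<^sub>R X \<in> grp" for t
      unfolding grp_def by (simp add: pattern_matrices_scaleR)
    moreover have "((\<lambda>t. mat 1 + t *\<^sub>R X) has_vector_derivative X) (at 0)"
      by (auto intro!: derivative_eq_intros)
    ultimately show "X \<in> lie_alg grp"
      unfolding lie_alg_def by (intro CollectI exI[of _ "\<lambda>t. mat 1 + t *\<^sub>R X"]) simp
  qed
qed

lemma commutator_ideal_pattern_matrices:
  "commutator_ideal (pattern_matrices P) = pattern_matrices (P O P)"
proof
  show "commutator_ideal (pattern_matrices P) \<subseteq> pattern_matrices (P O P)"
    unfolding commutator_ideal_def
    by (intro span_minimal subspace_pattern_matrices)
      (auto intro: pattern_matrices_diff pattern_matrices_mult)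
  have "matrix_unit a c \<in> {X ** Y - Y ** X |X Y. X \<in> pattern_matrices P \<and> Y \<in> pattern_matrices P}"
    if ac: "(a, c) \<in> P O P" for a c
  proof -
    obtain b where ab: "(a, b) \<in> P" and bc: "(b, c) \<in> P" using ac by blast
    have "c \<noteq> a" using ab bc relcomp3_empty by blast
    then have "matrix_unit a c = matrix_unit a b ** matrix_unit b c - matrix_unit b c ** matrix_unit a b"
      by (simp add: matrix_unit_mult)
    then show ?thesis using matrix_unit_in_pattern_matrices[OF ab] matrix_unit_in_pattern_matrices[OF bc]
      by blast
  qed
  then show "pattern_matrices (P O P) \<subseteq> commutator_ideal (pattern_matrices P)"
    unfolding commutator_ideal_def pattern_matrices_eq_span[of "P O P"]
    by (intro span_mono image_subsetI) (simp add: case_prod_beta)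
qed

text \<open>Coordinates on the abelianisation: left multiplication by an element of grp changes only
  the entries in P O P, which abel_part forgets.\<close>
definition abel_part :: "real^'n^'n \<Rightarrow> real^'n^'n" where
  "abel_part Y = (\<chi> a b. if (a, b) \<in> P - P O P then Y $ a $ b else 0)"

lemma abel_part_in_pattern_matrices: "abel_part Y \<in> pattern_matrices P"
  unfolding abel_part_def pattern_matrices_def by auto

lemma linear_abel_part: "linear abel_part"
  by (rule linearI) (simp_all add: abel_part_def vec_eq_iff)

lemma abel_part_eq_0: "Y \<in> pattern_matrices (P O P) \<Longrightarrow> abel_part Y = 0"
  unfolding abel_part_def pattern_matrices_def by (simp add: vec_eq_iff)

lemma diff_abel_part: "Y \<in> pattern_matrices P \<Longrightarrow> Y - abel_part Y \<in> pattern_matrices (P O P)"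
  unfolding abel_part_def pattern_matrices_def by auto

lemma abel_part_left_invariant:
  assumes "y \<in> grp" "Z \<in> pattern_matrices P"
  shows "abel_part (y ** Z) = abel_part Z"
proof -
  have "y ** Z = Z + (y - mat 1) ** Z" by (simp add: matrix_diff_rdistrib)
  moreover have "(y - mat 1) ** Z \<in> pattern_matrices (P O P)"
    using assms pattern_matrices_mult unfolding grp_def by blast
  ultimately show ?thesis
    using abel_part_eq_0 linear_add[OF linear_abel_part] by simp
qed

text \<open>The functional is X \<mapsto> \<psi> X - i \<psi> (J X), where the real functional \<psi> vanishes on the
  commutator ideal and on its image under J, precomposed with the left-invariant abel_part.\<close>
lemma exists_left_invariant_hol_functional:
  assumes "2 * card (P O P) < card P" and J: "left_inv_acs grp J"
  obtains F X0 where "linear F" "X0 \<in> pattern_matrices P"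
    and "\<And>y X. y \<in> grp \<Longrightarrow> X \<in> pattern_matrices P \<Longrightarrow> F (y ** J X) = \<i> * F (y ** X)"
    and "\<And>y. y \<in> grp \<Longrightarrow> F (y ** X0) \<noteq> 0"
proof -
  let ?L = "pattern_matrices P" and ?K = "pattern_matrices (P O P)"
  have JL: "\<And>X. X \<in> ?L \<Longrightarrow> J X \<in> ?L" and JJ: "\<And>X. X \<in> ?L \<Longrightarrow> J (J X) = - X"
    and Jadd: "\<And>X Y. X \<in> ?L \<Longrightarrow> Y \<in> ?L \<Longrightarrow> J (X + Y) = J X + J Y"
    and Jscale: "\<And>X a. X \<in> ?L \<Longrightarrow> J (a *\<^sub>R X) = a *\<^sub>R J X"
    using J unfolding left_inv_acs_def lie_alg_grp by blast+
  obtain z X0 where X0: "X0 \<in> ?L" "inner z X0 \<noteq> 0"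
    and zK: "\<And>Y. Y \<in> ?K \<Longrightarrow> inner z Y = 0" and zJK: "\<And>Y. Y \<in> ?K \<Longrightarrow> inner z (J Y) = 0"
  proof (rule exists_functional_vanishing_on_subspace_and_image[OF subspace_pattern_matrices
        relcomp_subset_pattern_matrices _ Jadd Jscale])
    show "2 * dim ?K < dim ?L" using assms(1) by (simp only: dim_pattern_matrices)
  qed (assumption | rule that)+
  define \<theta> where "\<theta> X = complex_of_real (inner z X) - \<i> * complex_of_real (inner z (J X))" for X
  define F where "F Y = \<theta> (abel_part Y)" for Y
  have "linear F"
  proof (rule linearI)
    fix A B show "F (A + B) = F A + F B"
      unfolding F_def \<theta>_def linear_add[OF linear_abel_part]
        Jadd[OF abel_part_in_pattern_matrices abel_part_in_pattern_matrices] inner_add_right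
      by (simp add: algebra_simps)
    fix r :: real show "F (r *\<^sub>R A) = r *\<^sub>R F A"
      unfolding F_def \<theta>_def linear_scale[OF linear_abel_part]
        Jscale[OF abel_part_in_pattern_matrices] inner_scaleR_right
      by (simp add: scaleR_conv_of_real algebra_simps)
  qed
  moreover have F_left: "F (y ** X) = \<theta> X" if "y \<in> grp" "X \<in> ?L" for y X
  proof -
    have "inner z (X - abel_part X) = 0" "inner z (J (X - abel_part X)) = 0"
      using diff_abel_part[OF that(2)] zK zJK by blast+
    moreover have "J X = J (abel_part X) + J (X - abel_part X)"
      using Jadd[OF abel_part_in_pattern_matrices pattern_matrices_diff[OF that(2)
            abel_part_in_pattern_matrices], of X X] by simp
    ultimately show ?thesis
      unfolding F_def \<theta>_def abel_part_left_invariant[OF that]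
      by (simp add: inner_diff_right inner_add_right)
  qed
  moreover have "F (y ** J X) = \<i> * F (y ** X)" if "y \<in> grp" "X \<in> ?L" for y X
    using that JL[OF that(2)] by (simp add: F_left \<theta>_def JJ algebra_simps)
  moreover have "F (y ** X0) \<noteq> 0" if "y \<in> grp" for y
  proof
    assume "F (y ** X0) = 0"
    then have "Re (\<theta> X0) = 0" using F_left[OF that X0(1)] by simp
    then show False using X0(2) by (simp add: \<theta>_def)
  qed
  ultimately show ?thesis using that X0(1) by blast
qed

lemma hol_indep_one:
  assumes "2 * card (P O P) < card P" and "left_inv_acs grp J" and "x \<in> grp"
  shows "hol_indep grp J x 1"
proof -
  obtain F X0 where F: "linear F" "X0 \<in> pattern_matrices P"
    and hol: "\<And>y X. y \<in> grp \<Longrightarrow> X \<in> pattern_matrices P \<Longrightarrow> F (y ** J X) = \<i> * F (y ** X)"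
    and nonzero: "F (x ** X0) \<noteq> 0"
    using exists_left_invariant_hol_functional[OF assms(1,2)] assms(3) by metis
  show ?thesis unfolding hol_indep_def
  proof (intro exI[of _ UNIV] exI[of _ "\<lambda>_. F"] conjI allI impI ballI open_UNIV UNIV_I)
    show "smooth_on UNIV F" by (rule smooth_on_linear[OF F(1)])
    fix y X assume "y \<in> UNIV \<inter> grp" "X \<in> lie_alg grp"
    then show "dd F y (y ** J X) = \<i> * dd F y (y ** X)"
      by (simp add: dd_linear[OF F(1)] hol lie_alg_grp)
  next
    fix c :: "nat \<Rightarrow> complex" and i :: nat
    assume "\<forall>X\<in>lie_alg grp. (\<Sum>i<1. c i * dd F x (x ** X)) = 0" and "i < 1"
    then show "c i = 0"
      using F(2) nonzero by (auto simp: dd_linear[OF F(1)] lie_alg_grp)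
  qed
qed

lemma type_T_grp:
  assumes "2 * card (P O P) < card P"
  shows "type_T grp"
  unfolding type_T_def
proof (intro allI impI)
  fix J assume J: "left_inv_acs grp J"
  define S where "S = {k. hol_indep grp J (mat 1) k}"
  have "S \<subseteq> {..dim (lie_alg grp)}" unfolding S_def using hol_indep_le_dim by auto
  then have "finite S" by (rule finite_subset) simp
  moreover have "1 \<in> S" unfolding S_def using hol_indep_one[OF assms J one_in_grp] by simp
  ultimately have m: "Max S \<in> S" "1 \<le> Max S" "\<And>k. k \<in> S \<Longrightarrow> k \<le> Max S"
    by (auto intro: Max_in Max_ge)
  \<comment> \<open>left translations move x to the identity and back, so m(x) = m(1)\<close>
  have "has_hol_type grp J (Max S)" unfolding has_hol_type_def
  proof (intro ballI conjI allI impI)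
    fix x assume x: "x \<in> grp"
    obtain x' where x': "x' \<in> grp" "x' ** x = mat 1" "x ** x' = mat 1" using grp_inverse[OF x] .
    show "hol_indep grp J x (Max S)"
      using hol_indep_left_translate[OF grp_mult_closed x'(1,2), of J "mat 1"] m(1)
      by (simp add: S_def)
    fix k assume "hol_indep grp J x k"
    have "k \<in> S"
      using hol_indep_left_translate[OF grp_mult_closed x x'(3) \<open>hol_indep grp J x k\<close>] x'(2)
      by (simp add: S_def)
    then show "k \<le> Max S" by (rule m(3))
  qed
  then show "\<exists>m. m \<noteq> 0 \<and> has_hol_type grp J m" using m(2) by (intro exI[of _ "Max S"]) simp
qed

end

section \<open>The product of the groups H(q,p)\<close>

lemma boff_Suc: "boff p q (Suc i) = boff p q i + bsize p q i"
  by (simp add: boff_def)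

lemma boff_add_bsize_le:
  assumes "i < j" shows "boff p q i + bsize p q i \<le> boff p q j"
proof -
  have "boff p q (Suc i) \<le> boff p q j" unfolding boff_def using assms by (intro sum_mono2) auto
  then show ?thesis by (simp add: boff_Suc)
qed

lemma Nsize_eq_boff: "Nsize n p q = boff p q n"
  by (simp add: Nsize_def boff_def)

lemma block_unique:
  assumes "boff p q i \<le> k" "k < boff p q i + bsize p q i"
    and "boff p q j \<le> k" "k < boff p q j + bsize p q j"
  shows "i = j"
  using boff_add_bsize_le[of i j p q] boff_add_bsize_le[of j i p q] assms
  by (cases i j rule: linorder_cases) auto

lemma block_exists:
  "r < boff p q n \<Longrightarrow> \<exists>i<n. boff p q i \<le> r \<and> r < boff p q i + bsize p q i"
proof (induction n)
  case 0 then show ?case by (simp add: boff_def)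
next
  case (Suc n)
  then show ?case
    by (cases "r < boff p q n") (auto simp: boff_Suc intro: less_SucI)
qed

definition diag_blocks ::
    "nat \<Rightarrow> (nat \<Rightarrow> nat) \<Rightarrow> (nat \<Rightarrow> nat) \<Rightarrow> (nat \<Rightarrow> (nat \<times> nat) set) \<Rightarrow> (nat \<times> nat) set" where
  "diag_blocks n p q R = (\<Union>i<n. map_prod ((+) (boff p q i)) ((+) (boff p q i)) ` R i)"

definition within_blocks :: "(nat \<Rightarrow> nat) \<Rightarrow> (nat \<Rightarrow> nat) \<Rightarrow> (nat \<Rightarrow> (nat \<times> nat) set) \<Rightarrow> bool" where
  "within_blocks p q R \<longleftrightarrow> (\<forall>i a b. (a, b) \<in> R i \<longrightarrow> a < bsize p q i \<and> b < bsize p q i)"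

lemma mem_diag_blocks: "(r, c) \<in> diag_blocks n p q R \<longleftrightarrow>
   (\<exists>i<n. boff p q i \<le> r \<and> boff p q i \<le> c \<and> (r - boff p q i, c - boff p q i) \<in> R i)"
  unfolding diag_blocks_def by force

lemma diag_blocks_relcomp:
  assumes R: "within_blocks p q R" and S: "within_blocks p q S"
  shows "diag_blocks n p q R O diag_blocks n p q S = diag_blocks n p q (\<lambda>i. R i O S i)"
proof (rule set_eqI, clarify)
  fix r c
  show "(r, c) \<in> diag_blocks n p q R O diag_blocks n p q S \<longleftrightarrow>
        (r, c) \<in> diag_blocks n p q (\<lambda>i. R i O S i)"
  proof
    assume "(r, c) \<in> diag_blocks n p q R O diag_blocks n p q S"
    then obtain k where "(r, k) \<in> diag_blocks n p q R" "(k, c) \<in> diag_blocks n p q S" by blast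
    then obtain i j where
      i: "i < n" "boff p q i \<le> r" "boff p q i \<le> k" "(r - boff p q i, k - boff p q i) \<in> R i" and
      j: "j < n" "boff p q j \<le> k" "boff p q j \<le> c" "(k - boff p q j, c - boff p q j) \<in> S j"
      unfolding mem_diag_blocks by blast
    have "k - boff p q i < bsize p q i" "k - boff p q j < bsize p q j"
      using R S i(4) j(4) unfolding within_blocks_def by blast+
    then have "i = j" using block_unique[of p q i k j] i j by linarith
    then show "(r, c) \<in> diag_blocks n p q (\<lambda>i. R i O S i)" unfolding mem_diag_blocks using i j by blast
  next
    assume "(r, c) \<in> diag_blocks n p q (\<lambda>i. R i O S i)"
    then obtain i k where i: "i < n" "boff p q i \<le> r" "boff p q i \<le> c"
      "(r - boff p q i, k) \<in> R i" "(k, c - boff p q i) \<in> S i"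
      unfolding mem_diag_blocks by blast
    then have "(r, boff p q i + k) \<in> diag_blocks n p q R" "(boff p q i + k, c) \<in> diag_blocks n p q S"
      unfolding mem_diag_blocks by auto
    then show "(r, c) \<in> diag_blocks n p q R O diag_blocks n p q S" by blast
  qed
qed

lemma diag_blocks_mono: "(\<And>i. R i \<subseteq> S i) \<Longrightarrow> diag_blocks n p q R \<subseteq> diag_blocks n p q S"
  unfolding diag_blocks_def by blast

lemma diag_blocks_bound:
  assumes "within_blocks p q R" "(r, c) \<in> diag_blocks n p q R"
  shows "r < Nsize n p q \<and> c < Nsize n p q"
proof -
  obtain i where i: "i < n" "boff p q i \<le> r" "boff p q i \<le> c"
    "(r - boff p q i, c - boff p q i) \<in> R i" using assms(2) unfolding mem_diag_blocks by blast
  have "r - boff p q i < bsize p q i" "c - boff p q i < bsize p q i"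
    using assms(1) i(4) unfolding within_blocks_def by blast+
  moreover have "boff p q i + bsize p q i \<le> boff p q n" using boff_add_bsize_le[OF i(1)] .
  ultimately show ?thesis using i unfolding Nsize_eq_boff by linarith
qed

lemma card_diag_blocks:
  assumes R: "within_blocks p q R" and fin: "\<And>i. finite (R i)"
  shows "card (diag_blocks n p q R) = (\<Sum>i<n. card (R i))"
proof -
  let ?shift = "\<lambda>i. map_prod ((+) (boff p q i)) ((+) (boff p q i))"
  have "card (diag_blocks n p q R) = (\<Sum>i<n. card (?shift i ` R i))"
    unfolding diag_blocks_def
  proof (rule card_UN_disjoint)
    show "\<forall>i\<in>{..<n}. \<forall>j\<in>{..<n}. i \<noteq> j \<longrightarrow> ?shift i ` R i \<inter> ?shift j ` R j = {}"
    proof (intro ballI impI)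
      fix i j :: nat assume "i \<noteq> j"
      show "?shift i ` R i \<inter> ?shift j ` R j = {}"
      proof (rule ccontr)
        assume "?shift i ` R i \<inter> ?shift j ` R j \<noteq> {}"
        then obtain a b a' b' where ab: "(a, b) \<in> R i" and ab': "(a', b') \<in> R j"
          and e: "boff p q i + a = boff p q j + a'" by auto
        have "a < bsize p q i" "a' < bsize p q j" using R ab ab' unfolding within_blocks_def by blast+
        then show False using block_unique[of p q i "boff p q i + a" j] e \<open>i \<noteq> j\<close> by simp
      qed
    qed
  qed (use fin in auto)
  also have "\<dots> = (\<Sum>i<n. card (R i))"
    by (intro sum.cong card_image) (auto simp: inj_on_def)
  finally show ?thesis .
qed

text \<open>Positions of the entries A, B and of the diagonal of C in the matrix of H(q,p).\<close>
definition H_pattern :: "nat \<Rightarrow> nat \<Rightarrow> (nat \<times> nat) set" where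
  "H_pattern p q = {0..<p} \<times> {p..<p + 2 * q} \<union> (\<lambda>j. (p + j, p + q + j)) ` {0..<q}"

definition B_block :: "nat \<Rightarrow> nat \<Rightarrow> (nat \<times> nat) set" where
  "B_block p q = {0..<p} \<times> {p + q..<p + 2 * q}"

lemma H_pattern_relcomp: "H_pattern p q O H_pattern p q = B_block p q"
proof (rule set_eqI, clarify)
  fix a c
  show "(a, c) \<in> H_pattern p q O H_pattern p q \<longleftrightarrow> (a, c) \<in> B_block p q"
  proof
    assume "(a, c) \<in> H_pattern p q O H_pattern p q"
    then obtain b where ab: "(a, b) \<in> H_pattern p q" and bc: "(b, c) \<in> H_pattern p q" by blast
    from bc have "b < p \<or> (\<exists>j<q. b = p + j \<and> c = p + q + j)" unfolding H_pattern_def by auto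
    with ab show "(a, c) \<in> B_block p q" unfolding H_pattern_def B_block_def by auto
  next
    assume "(a, c) \<in> B_block p q"
    then have "(a, c - q) \<in> H_pattern p q" "(c - q, c) \<in> H_pattern p q"
      unfolding H_pattern_def B_block_def by (auto intro!: image_eqI[of _ _ "c - p - q"])
    then show "(a, c) \<in> H_pattern p q O H_pattern p q" by blast
  qed
qed

lemma H_pattern_relcomp_B_block: "H_pattern p q O B_block p q = {}"
  unfolding H_pattern_def B_block_def by auto

lemma B_block_subset: "B_block p q \<subseteq> H_pattern p q"
  unfolding H_pattern_def B_block_def by auto

lemma card_H_pattern: "card (H_pattern p q) = 2 * q * p + q"
proof -
  have "card (H_pattern p q) = card ({0..<p} \<times> {p..<p + 2 * q}) + card ((\<lambda>j. (p + j, p + q + j)) ` {0..<q})"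
    unfolding H_pattern_def by (rule card_Un_disjoint) auto
  also have "card ((\<lambda>j. (p + j, p + q + j)) ` {0..<q}) = q"
    by (subst card_image) (auto simp: inj_on_def)
  finally show ?thesis by (simp add: card_cartesian_product)
qed

lemma card_B_block: "card (B_block p q) = q * p"
  unfolding B_block_def by (simp add: card_cartesian_product)

abbreviation W_pattern :: "nat \<Rightarrow> (nat \<Rightarrow> nat) \<Rightarrow> (nat \<Rightarrow> nat) \<Rightarrow> (nat \<times> nat) set" where
  "W_pattern n p q \<equiv> diag_blocks n p q (\<lambda>i. H_pattern (p i) (q i))"

abbreviation W_B_blocks :: "nat \<Rightarrow> (nat \<Rightarrow> nat) \<Rightarrow> (nat \<Rightarrow> nat) \<Rightarrow> (nat \<times> nat) set" where
  "W_B_blocks n p q \<equiv> diag_blocks n p q (\<lambda>i. B_block (p i) (q i))"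

lemma within_blocks_H_pattern: "within_blocks p q (\<lambda>i. H_pattern (p i) (q i))"
  unfolding within_blocks_def H_pattern_def bsize_def by auto

lemma within_blocks_B_block: "within_blocks p q (\<lambda>i. B_block (p i) (q i))"
  unfolding within_blocks_def B_block_def bsize_def by auto

lemma W_pattern_relcomp: "W_pattern n p q O W_pattern n p q = W_B_blocks n p q"
  using diag_blocks_relcomp[OF within_blocks_H_pattern within_blocks_H_pattern]
  by (simp add: H_pattern_relcomp)

lemma W_pattern_relcomp_B_blocks: "W_pattern n p q O W_B_blocks n p q = {}"
  using diag_blocks_relcomp[OF within_blocks_H_pattern within_blocks_B_block]
  by (simp add: H_pattern_relcomp_B_block diag_blocks_def)

lemma W_B_blocks_subset: "W_B_blocks n p q \<subseteq> W_pattern n p q"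
  by (intro diag_blocks_mono B_block_subset)

lemma card_W_pattern: "card (W_pattern n p q) = (\<Sum>i<n. 2 * q i * p i + q i)"
proof -
  have "card (W_pattern n p q) = (\<Sum>i<n. card (H_pattern (p i) (q i)))"
    by (rule card_diag_blocks[OF within_blocks_H_pattern]) (simp add: H_pattern_def)
  then show ?thesis by (simp add: card_H_pattern)
qed

lemma card_W_B_blocks: "card (W_B_blocks n p q) = (\<Sum>i<n. q i * p i)"
proof -
  have "card (W_B_blocks n p q) = (\<Sum>i<n. card (B_block (p i) (q i)))"
    by (rule card_diag_blocks[OF within_blocks_B_block]) (simp add: B_block_def)
  then show ?thesis by (simp add: card_B_block)
qed

lemma blockdiag_eq_block:
  assumes i: "i < n" "boff p q i \<le> r" "r < boff p q i + bsize p q i"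
  shows "blockdiag n p q Hs r c = (if boff p q i \<le> c \<and> c < boff p q i + bsize p q i
                                   then Hs i (r - boff p q i) (c - boff p q i) else 0)"
proof -
  let ?t = "\<lambda>j. if boff p q j \<le> r \<and> r < boff p q j + bsize p q j
               \<and> boff p q j \<le> c \<and> c < boff p q j + bsize p q j
            then Hs j (r - boff p q j) (c - boff p q j) else 0"
  have "?t j = 0" if "j \<in> {..<n} - {i}" for j
    using block_unique[of p q i r j] i that by auto
  then have "blockdiag n p q Hs r c = ?t i"
    unfolding blockdiag_def using i(1) by (simp add: sum.remove)
  then show ?thesis using i by simp
qed

lemma Hmat_outside_H_pattern:
  assumes "r < p + 2 * q" "c < p + 2 * q" "(r, c) \<notin> H_pattern p q" "diag_mat q C"
  shows "Hmat q p A B C r c = (if r = c then 1 else 0)"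
proof -
  have "C (r - p) (c - p - q) = 0" if "p \<le> r" "r < p + q" "p + q \<le> c"
  proof -
    have "(p + (r - p), p + q + (r - p)) \<in> H_pattern p q"
      using that unfolding H_pattern_def by (intro UnI2 image_eqI[of _ _ "r - p"]) auto
    then have "c \<noteq> p + q + (r - p)" using assms(3) that by auto
    then have "r - p \<noteq> c - p - q" using that by linarith
    then show ?thesis using assms(2,4) that unfolding diag_mat_def by auto
  qed
  then show ?thesis using assms(1-3) unfolding Hmat_def H_pattern_def by auto
qed

lemma W_nat_outside_W_pattern:
  assumes "M \<in> W_nat n p q" "r < Nsize n p q" "c < Nsize n p q" "(r, c) \<notin> W_pattern n p q"
  shows "M r c = (if r = c then 1 else 0)"
proof -
  obtain A B C where M: "M = blockdiag n p q (\<lambda>i. Hmat (q i) (p i) (A i) (B i) (C i))"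
    and C: "\<forall>i<n. diag_mat (q i) (C i)" using assms(1) unfolding W_nat_def by blast
  obtain i where i: "i < n" "boff p q i \<le> r" "r < boff p q i + bsize p q i"
    using block_exists[of r p q n] assms(2) by (auto simp: Nsize_eq_boff)
  show ?thesis
  proof (cases "boff p q i \<le> c \<and> c < boff p q i + bsize p q i")
    case True
    have "(r - boff p q i, c - boff p q i) \<notin> H_pattern (p i) (q i)"
      using assms(4) i True unfolding mem_diag_blocks by blast
    then have "Hmat (q i) (p i) (A i) (B i) (C i) (r - boff p q i) (c - boff p q i)
        = (if r - boff p q i = c - boff p q i then 1 else 0)"
      using i True C by (intro Hmat_outside_H_pattern) (auto simp: bsize_def)
    then show ?thesis unfolding M blockdiag_eq_block[OF i] using i True by auto
  next
    case False
    then show ?thesis unfolding M blockdiag_eq_block[OF i] using i by auto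
  qed
qed

lemma W_nat_extension:
  fixes Y :: "nat \<Rightarrow> nat \<Rightarrow> real"
  assumes "\<And>r c. r < Nsize n p q \<Longrightarrow> c < Nsize n p q \<Longrightarrow> (r, c) \<notin> W_pattern n p q \<Longrightarrow>
               Y r c = (if r = c then 1 else 0)"
  obtains M where "M \<in> W_nat n p q" "\<And>r c. r < Nsize n p q \<Longrightarrow> c < Nsize n p q \<Longrightarrow> M r c = Y r c"
proof -
  define A where "A i j k = Y (boff p q i + j) (boff p q i + p i + k)" for i j k
  define B where "B i j k = Y (boff p q i + j) (boff p q i + p i + q i + k)" for i j k
  define C where "C i j k = (if j = k then Y (boff p q i + p i + j) (boff p q i + p i + q i + j) else 0)"
    for i j k
  define M where "M = blockdiag n p q (\<lambda>i. Hmat (q i) (p i) (A i) (B i) (C i))"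
  have "\<forall>i<n. diag_mat (q i) (C i)" unfolding diag_mat_def C_def by auto
  then have MW: "M \<in> W_nat n p q" unfolding W_nat_def M_def by blast
  moreover have "M r c = Y r c" if rc: "r < Nsize n p q" "c < Nsize n p q" for r c
  proof (cases "(r, c) \<in> W_pattern n p q")
    case True
    then obtain i where i: "i < n" "boff p q i \<le> r" "boff p q i \<le> c"
      and loc: "(r - boff p q i, c - boff p q i) \<in> H_pattern (p i) (q i)"
      unfolding mem_diag_blocks by blast
    define r' c' where "r' = r - boff p q i" and "c' = c - boff p q i"
    have "r' < bsize p q i" "c' < bsize p q i"
      using within_blocks_H_pattern[of p q] loc unfolding within_blocks_def r'_def c'_def by blast+
    then have "M r c = Hmat (q i) (p i) (A i) (B i) (C i) r' c'"
      unfolding M_def using blockdiag_eq_block[OF i(1,2)] i by (simp add: r'_def c'_def)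
    moreover have "r = boff p q i + r'" "c = boff p q i + c'"
      using i by (simp_all add: r'_def c'_def)
    moreover from loc have "r' < p i \<and> p i \<le> c' \<and> c' < p i + 2 * q i \<or>
        (\<exists>j<q i. r' = p i + j \<and> c' = p i + q i + j)"
      unfolding H_pattern_def r'_def[symmetric] c'_def[symmetric] by auto
    ultimately show ?thesis
      by (elim disjE exE conjE) (auto simp: Hmat_def A_def B_def C_def add.assoc)
  next
    case False
    then show ?thesis using assms rc W_nat_outside_W_pattern[OF MW rc] by simp
  qed
  ultimately show ?thesis using that by blast
qed

lemma to_mat_nth:
  assumes "bij_betw e {0..<N} (UNIV :: 'N::finite set)" "r < N" "c < N"
  shows "(to_mat N e M :: real^'N^'N) $ e r $ e c = M r c"
  using the_inv_into_f_f[OF bij_betw_imp_inj_on[OF assms(1)]] assms(2,3) by (simp add: to_mat_def)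

lemma map_prod_relcomp:
  assumes "inj_on e D" "R \<subseteq> D \<times> D" "S \<subseteq> D \<times> D"
  shows "map_prod e e ` R O map_prod e e ` S = map_prod e e ` (R O S)"
proof (intro equalityI subrelI)
  fix x z assume "(x, z) \<in> map_prod e e ` R O map_prod e e ` S"
  then obtain r k k' c where rk: "(r, k) \<in> R" and kc: "(k', c) \<in> S"
    and "e k = e k'" "x = e r" "z = e c" by auto
  moreover have "k = k'"
    using assms rk kc \<open>e k = e k'\<close> unfolding inj_on_def by blast
  ultimately show "(x, z) \<in> map_prod e e ` (R O S)" by auto
qed force

lemma mem_map_prod_image:
  assumes "inj_on e D" "R \<subseteq> D \<times> D" "r \<in> D" "c \<in> D"
  shows "(e r, e c) \<in> map_prod e e ` R \<longleftrightarrow> (r, c) \<in> R"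
proof
  assume "(e r, e c) \<in> map_prod e e ` R"
  then obtain r' c' where "(r', c') \<in> R" "e r = e r'" "e c = e c'" by auto
  moreover then have "r' \<in> D" "c' \<in> D" using assms(2) by auto
  ultimately show "(r, c) \<in> R" using assms(1,3,4) unfolding inj_on_def by metis
qed force

lemma W_pattern_subset: "W_pattern n p q \<subseteq> {0..<Nsize n p q} \<times> {0..<Nsize n p q}"
  using diag_blocks_bound[OF within_blocks_H_pattern] by fastforce

lemma W_B_blocks_subset_range: "W_B_blocks n p q \<subseteq> {0..<Nsize n p q} \<times> {0..<Nsize n p q}"
  using W_B_blocks_subset W_pattern_subset by blast

lemma W_pattern_image_relcomp:
  assumes "inj_on e {0..<Nsize n p q}"
  shows "map_prod e e ` W_pattern n p q O map_prod e e ` W_pattern n p q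
       = map_prod e e ` W_B_blocks n p q"
  by (simp add: map_prod_relcomp[OF assms W_pattern_subset W_pattern_subset] W_pattern_relcomp)

lemma card_W_pattern_image:
  assumes "inj_on e {0..<Nsize n p q}"
  shows "card (map_prod e e ` W_pattern n p q) = (\<Sum>i<n. 2 * q i * p i + q i)"
    and "card (map_prod e e ` W_pattern n p q O map_prod e e ` W_pattern n p q)
       = (\<Sum>i<n. q i * p i)"
proof -
  have inj: "inj_on (map_prod e e) ({0..<Nsize n p q} \<times> {0..<Nsize n p q})"
    using map_prod_inj_on[OF assms assms] .
  show "card (map_prod e e ` W_pattern n p q) = (\<Sum>i<n. 2 * q i * p i + q i)"
    using card_image[OF inj_on_subset[OF inj W_pattern_subset]] by (simp add: card_W_pattern)
  show "card (map_prod e e ` W_pattern n p q O map_prod e e ` W_pattern n p q)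
      = (\<Sum>i<n. q i * p i)"
    using card_image[OF inj_on_subset[OF inj W_B_blocks_subset_range]]
    by (simp add: W_pattern_image_relcomp[OF assms] card_W_B_blocks)
qed

lemma pattern_group_W_pattern:
  assumes "inj_on e {0..<Nsize n p q}"
  shows "pattern_group (map_prod e e ` W_pattern n p q)"
proof
  show "map_prod e e ` W_pattern n p q O map_prod e e ` W_pattern n p q
      \<subseteq> map_prod e e ` W_pattern n p q"
    unfolding W_pattern_image_relcomp[OF assms] by (intro image_mono W_B_blocks_subset)
  show "map_prod e e ` W_pattern n p q O map_prod e e ` W_pattern n p q O map_prod e e ` W_pattern n p q
      = {}"
    unfolding W_pattern_image_relcomp[OF assms]
      map_prod_relcomp[OF assms W_pattern_subset W_B_blocks_subset_range] W_pattern_relcomp_B_blocks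
    by simp
qed

lemma Wgrp_eq_grp:
  assumes e: "bij_betw e {0..<Nsize n p q} (UNIV :: 'N::finite set)"
  shows "Wgrp n p q e = pattern_group.grp (map_prod e e ` W_pattern n p q)"
proof -
  let ?N = "Nsize n p q" and ?P = "map_prod e e ` W_pattern n p q"
  have inj: "inj_on e {0..<?N}" using e by (rule bij_betw_imp_inj_on)
  interpret pattern_group ?P by (rule pattern_group_W_pattern[OF inj])
  have e_surj: "\<exists>r<?N. a = e r" for a :: 'N
    using e unfolding bij_betw_def by force
  \<comment> \<open>both groups consist of the matrices that agree with the identity outside ?P\<close>
  have outside: "(Y - mat 1) $ e r $ e c = 0 \<longleftrightarrow> Y $ e r $ e c = (if r = c then 1 else 0)"
    if "r < ?N" "c < ?N" for Y :: "real^'N^'N" and r c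
    using inj that unfolding inj_on_def by (auto simp: mat_def)
  have notin: "(e r, e c) \<notin> ?P \<longleftrightarrow> (r, c) \<notin> W_pattern n p q" if "r < ?N" "c < ?N" for r c
    using mem_map_prod_image[OF inj W_pattern_subset] that by simp
  show ?thesis
  proof (intro equalityI subsetI)
    fix Y assume "Y \<in> Wgrp n p q e"
    then obtain M where Y: "Y = to_mat ?N e M" and M: "M \<in> W_nat n p q"
      unfolding Wgrp_def by blast
    have entry: "(Y - mat 1) $ e r $ e c = 0" if "r < ?N" "c < ?N" "(e r, e c) \<notin> ?P" for r c
    proof -
      have "Y $ e r $ e c = (if r = c then 1 else 0)"
        using W_nat_outside_W_pattern[OF M] to_mat_nth[OF e] notin that by (simp add: Y)
      then show ?thesis using outside that by blast
    qed
    show "Y \<in> grp" unfolding grp_def pattern_matrices_def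
    proof (intro CollectI allI impI)
      fix a b assume "(a, b) \<notin> ?P"
      moreover obtain r c where "r < ?N" "c < ?N" "a = e r" "b = e c" using e_surj by meson
      ultimately show "(Y - mat 1) $ a $ b = 0" using entry by blast
    qed
  next
    fix Y assume "Y \<in> grp"
    then have "(Y - mat 1) $ e r $ e c = 0" if "(r, c) \<notin> W_pattern n p q" "r < ?N" "c < ?N" for r c
      using notin[OF that(2,3)] that(1) unfolding grp_def pattern_matrices_def by simp
    then have "Y $ e r $ e c = (if r = c then 1 else 0)"
      if "r < ?N" "c < ?N" "(r, c) \<notin> W_pattern n p q" for r c
      using outside that by blast
    from W_nat_extension[of n p q "\<lambda>r c. Y $ e r $ e c", OF this]
    obtain M where M: "M \<in> W_nat n p q" and MY: "\<And>r c. r < ?N \<Longrightarrow> c < ?N \<Longrightarrow> M r c = Y $ e r $ e c"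
      by blast
    have "Y = to_mat ?N e M" unfolding vec_eq_iff
    proof (intro allI)
      fix a b obtain r c where "r < ?N" "c < ?N" "a = e r" "b = e c" using e_surj by meson
      then show "Y $ a $ b = to_mat ?N e M $ a $ b" using MY to_mat_nth[OF e] by simp
    qed
    then show "Y \<in> Wgrp n p q e" unfolding Wgrp_def using M by blast
  qed
qed

theorem mainTheorem4:
  fixes n :: nat and p q :: "nat \<Rightarrow> nat" and e :: "nat \<Rightarrow> 'N::finite"
  assumes "n \<ge> 1"
    and "\<forall>i<n. q i > 0"
    and "even (\<Sum>i<n. q i)"
    and "bij_betw e {0..<Nsize n p q} (UNIV :: 'N set)"
  shows "dim (lie_alg (Wgrp n p q e)) = (\<Sum>i<n. 2 * q i * p i + q i)
       \<and> even (dim (lie_alg (Wgrp n p q e)))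
       \<and> dim (commutator_ideal (lie_alg (Wgrp n p q e))) = (\<Sum>i<n. q i * p i)
       \<and> dim (lie_alg (Wgrp n p q e)) \<ge> 2 * dim (commutator_ideal (lie_alg (Wgrp n p q e))) + 2
       \<and> type_T (Wgrp n p q e)"
proof -
  let ?P = "map_prod e e ` W_pattern n p q"
  have inj: "inj_on e {0..<Nsize n p q}" using assms(4) by (rule bij_betw_imp_inj_on)
  interpret pattern_group ?P by (rule pattern_group_W_pattern[OF inj])
  have "(\<Sum>i<n. 2 * q i * p i + q i) = 2 * (\<Sum>i<n. q i * p i) + (\<Sum>i<n. q i)"
    by (simp add: sum.distrib sum_distrib_left mult.assoc)
  moreover have "(\<Sum>i<n. q i) \<ge> 2"
  proof -
    have "0 < q 0" "q 0 \<le> (\<Sum>i<n. q i)" using assms(1,2) by (auto intro: member_le_sum)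
    moreover have "(\<Sum>i<n. q i) \<noteq> 1" using assms(3) by auto
    ultimately show ?thesis by linarith
  qed
  ultimately show ?thesis
    using type_T_grp assms(3) card_W_pattern_image[OF inj]
    by (simp add: Wgrp_eq_grp[OF assms(4)] lie_alg_grp commutator_ideal_pattern_matrices
        dim_pattern_matrices)
qed

end
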